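(* Every maximal $k$-ideal of the semiring $V\mathbb{B}(\mathbf{t})^\circ=\{x\in V\mathbb{B}(\mathbf{t}):x\le1\}$ is of the form \[ \mathfrak{m}^\dagger_<=\Big\{\tfrac ab\in V\mathbb{B}(\mathbf{t})^\circ : \min{}_<(b)\notin a\Big\} \] for some monomial order $<$ on $\mathbb{N}^m$ (here $a,b\in V\mathbb{B}[\mathbf{t}]$ are viewed as finite subsets of $\mathbb{N}^m$, and the condition "$\min_<(b)\notin a$" is what the paper writes as $a_{\min_<(b)}=0$).
   Context: $V\mathbb{B}[\mathbf{t}]$ ($\mathbf{t}=(t_1,\dots,t_m)$) is the idempotent semiring of subsets of $\mathbb{N}^m$ equal to the vertex set of their Newton polyhedron $\operatorname{conv}(\cdot)+\mathbb{R}^m_{\ge0}$, with $a\oplus b$ = vertices of the Newton polyhedron of $a\cup b$, $a\odot b$ = vertices of that of $a+b$, $0=\emptyset$, $1=\{0\}$. $V\mathbb{B}(\mathbf{t})$ is its fraction semifield, ordered by $x\le y$ iff $x\oplus y=y$. An ideal of a semiring contains $0$ and is closed under addition and multiplication by semiring elements; it is a $k$-ideal if $a+b\in I$, $a\in I$ imply $b\in I$. A monomial order on $\mathbb{N}^m$ is a total order $<$ with $0<a$ for $a\ne0$ and $a<b\Rightarrow a+c<b+c$. *)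

theory Defs
  imports "HOL-Analysis.Analysis"
begin

text \<open>Exponent vectors in N^m, with m = CARD('n) the number of variables.\<close>
type_synonym 'n pt = "'n \<Rightarrow> nat"

definition emb :: "'n::finite pt \<Rightarrow> real ^ 'n" where
  "emb p = (\<chi> i. real (p i))"

definition padd :: "'n pt \<Rightarrow> 'n pt \<Rightarrow> 'n pt" where
  "padd p q = (\<lambda>i. p i + q i)"

definition newt :: "'n::finite pt set \<Rightarrow> (real ^ 'n) set" where
  "newt S = {x + r | x r. x \<in> convex hull (emb ` S) \<and> (\<forall>i. 0 \<le> r $ i)}"

definition vert :: "'n::finite pt set \<Rightarrow> 'n pt set" where
  "vert S = {p. emb p extreme_point_of newt S}"

definition VB :: "'n::finite pt set set" where
  "VB = {S. finite S \<and> vert S = S}"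

definition vplus :: "'n::finite pt set \<Rightarrow> 'n pt set \<Rightarrow> 'n pt set" where
  "vplus a b = vert (a \<union> b)"

definition vtimes :: "'n::finite pt set \<Rightarrow> 'n pt set \<Rightarrow> 'n pt set" where
  "vtimes a b = vert {padd x y | x y. x \<in> a \<and> y \<in> b}"

definition vone :: "'n pt set" where
  "vone = {(\<lambda>i. 0)}"

definition Fdom :: "('n::finite pt set \<times> 'n pt set) set" where
  "Fdom = {(a, b). a \<in> VB \<and> b \<in> VB \<and> b \<noteq> {}}"

definition frel :: "(('n::finite pt set \<times> 'n pt set) \<times> ('n pt set \<times> 'n pt set)) set" where
  "frel = {((a, b), (c, d)). (a, b) \<in> Fdom \<and> (c, d) \<in> Fdom \<and> vtimes a d = vtimes c b}"

definition VBfrac :: "('n::finite pt set \<times> 'n pt set) set set" where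
  "VBfrac = Fdom // frel"

definition fcls :: "'n::finite pt set \<Rightarrow> 'n pt set \<Rightarrow> ('n pt set \<times> 'n pt set) set" where
  "fcls a b = frel `` {(a, b)}"

definition fplus :: "('n::finite pt set \<times> 'n pt set) set \<Rightarrow> ('n pt set \<times> 'n pt set) set
    \<Rightarrow> ('n pt set \<times> 'n pt set) set" where
  "fplus X Y = (let p = (SOME p. p \<in> X); q = (SOME q. q \<in> Y) in
     fcls (vplus (vtimes (fst p) (snd q)) (vtimes (fst q) (snd p))) (vtimes (snd p) (snd q)))"

definition fmult :: "('n::finite pt set \<times> 'n pt set) set \<Rightarrow> ('n pt set \<times> 'n pt set) set
    \<Rightarrow> ('n pt set \<times> 'n pt set) set" where
  "fmult X Y = (let p = (SOME p. p \<in> X); q = (SOME q. q \<in> Y) in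
     fcls (vtimes (fst p) (fst q)) (vtimes (snd p) (snd q)))"

definition fzero :: "('n::finite pt set \<times> 'n pt set) set" where
  "fzero = fcls {} vone"

definition fone :: "('n::finite pt set \<times> 'n pt set) set" where
  "fone = fcls vone vone"

definition fle :: "('n::finite pt set \<times> 'n pt set) set \<Rightarrow> ('n pt set \<times> 'n pt set) set \<Rightarrow> bool" where
  "fle X Y \<longleftrightarrow> fplus X Y = Y"

definition Circ :: "('n::finite pt set \<times> 'n pt set) set set" where
  "Circ = {X \<in> VBfrac. fle X fone}"

definition circ_ideal :: "('n::finite pt set \<times> 'n pt set) set set \<Rightarrow> bool" where
  "circ_ideal I \<longleftrightarrow> I \<subseteq> Circ \<and> fzero \<in> I
     \<and> (\<forall>x\<in>I. \<forall>y\<in>I. fplus x y \<in> I)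
     \<and> (\<forall>r\<in>Circ. \<forall>x\<in>I. fmult r x \<in> I \<and> fmult x r \<in> I)"

definition circ_k_ideal :: "('n::finite pt set \<times> 'n pt set) set set \<Rightarrow> bool" where
  "circ_k_ideal I \<longleftrightarrow> circ_ideal I
     \<and> (\<forall>a\<in>I. \<forall>b\<in>Circ. fplus a b \<in> I \<longrightarrow> b \<in> I)"

definition maximal_circ_k_ideal :: "('n::finite pt set \<times> 'n pt set) set set \<Rightarrow> bool" where
  "maximal_circ_k_ideal I \<longleftrightarrow> circ_k_ideal I \<and> I \<noteq> Circ
     \<and> (\<forall>J. circ_k_ideal J \<and> J \<noteq> Circ \<and> I \<subseteq> J \<longrightarrow> J = I)"

definition monomial_order :: "('n pt \<Rightarrow> 'n pt \<Rightarrow> bool) \<Rightarrow> bool" where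
  "monomial_order lt \<longleftrightarrow>
     (\<forall>a. \<not> lt a a) \<and> (\<forall>a b c. lt a b \<longrightarrow> lt b c \<longrightarrow> lt a c)
     \<and> (\<forall>a b. a \<noteq> b \<longrightarrow> lt a b \<or> lt b a)
     \<and> (\<forall>a. a \<noteq> (\<lambda>i. 0) \<longrightarrow> lt (\<lambda>i. 0) a)
     \<and> (\<forall>a b c. lt a b \<longrightarrow> lt (padd a c) (padd b c))"

definition min_ord :: "('n pt \<Rightarrow> 'n pt \<Rightarrow> bool) \<Rightarrow> 'n pt set \<Rightarrow> 'n pt" where
  "min_ord lt b = (THE x. x \<in> b \<and> (\<forall>y\<in>b. y \<noteq> x \<longrightarrow> lt x y))"

definition m_dagger :: "('n::finite pt \<Rightarrow> 'n pt \<Rightarrow> bool) \<Rightarrow> ('n pt set \<times> 'n pt set) set set" where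
  "m_dagger lt = {X \<in> Circ. \<exists>a b. (a, b) \<in> X \<and> min_ord lt b \<notin> a}"

end

theory Submission
  imports Defs
begin

text \<open>
  A fraction a/b of VB(t) is determined by its valuation
  u \<mapsto> min {<u,p> | p \<in> a} - min {<u,p> | p \<in> b} on the orthant u \<ge> 0, because a Newton
  polyhedron is determined by its support function.  Under this identification the addition
  of VB(t) becomes pointwise min, the multiplication becomes +, and the elements x \<le> 1 are
  those with nonnegative valuation.  Hence a k-ideal I is upward closed, and maximality provides
  every x \<notin> I with a partner i \<in> I such that min (val i) (val x) = 0.  For p \<noteq> q the
  fractions p/(p+q) and q/(p+q) add up to 1, so they do not both lie in I; if neither did,
  the sum of their partners would have valuation 0 off the hyperplane <u,p> = <u,q>, hence
  everywhere by continuity, i.e. it would be 1.  Therefore p < q iff p/(p+q) \<notin> I is a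
  monomial order, the least element v of a finite set b is the only w \<in> b with w/b \<notin> I,
  and a/b \<in> I iff w/b \<in> I for all w \<in> a iff v \<notin> a.
\<close>

section \<open>Tropical evaluation and Newton polyhedra\<close>

text \<open>Only meaningful for S \<noteq> {}; etrop below takes the value \<infinity> on the empty set.\<close>

definition trop :: "'n::finite pt set \<Rightarrow> real^'n \<Rightarrow> real" where
  "trop S u = Min ((\<lambda>p. u \<bullet> emb p) ` S)"

lemma trop_le: "finite S \<Longrightarrow> p \<in> S \<Longrightarrow> trop S u \<le> u \<bullet> emb p"
  unfolding trop_def by simp

lemma trop_attained:
  assumes "finite S" "S \<noteq> {}"
  obtains p where "p \<in> S" "trop S u = u \<bullet> emb p"
proof -
  have "trop S u \<in> (\<lambda>p. u \<bullet> emb p) ` S"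
    unfolding trop_def using assms by (intro Min_in) auto
  then show ?thesis using that by blast
qed

lemma trop_insert: "finite S \<Longrightarrow> S \<noteq> {} \<Longrightarrow> trop (insert p S) u = min (u \<bullet> emb p) (trop S u)"
  unfolding trop_def by simp

lemma trop_singleton [simp]: "trop {p} u = u \<bullet> emb p"
  by (simp add: trop_def)

lemma trop_pair [simp]: "trop {p, q} u = min (u \<bullet> emb p) (u \<bullet> emb q)"
  unfolding trop_def by simp

lemma continuous_on_trop: "finite S \<Longrightarrow> S \<noteq> {} \<Longrightarrow> continuous_on UNIV (trop S)"
proof (induction S rule: finite_ne_induct)
  case (singleton p)
  then show ?case by (simp add: trop_def continuous_on_inner)
next
  case (insert p S)
  then have "trop (insert p S) = (\<lambda>u. min (u \<bullet> emb p) (trop S u))"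
    by (simp add: trop_insert fun_eq_iff)
  with insert show ?case by (simp add: continuous_on_min continuous_on_inner)
qed

lemma emb_inj: "emb p = emb q \<Longrightarrow> p = q"
  unfolding emb_def by (auto simp: vec_eq_iff fun_eq_iff)

lemma emb_zero [simp]: "emb (\<lambda>i. 0) = 0"
  by (simp add: emb_def vec_eq_iff)

lemma emb_nonneg: "0 \<le> emb p"
  by (simp add: emb_def less_eq_vec_def)

lemma emb_padd: "emb (padd p q) = emb p + emb q"
  unfolding emb_def padd_def by (simp add: vec_eq_iff)

lemma mem_newt: "y \<in> newt S \<longleftrightarrow> (\<exists>x r. y = x + r \<and> x \<in> convex hull (emb ` S) \<and> 0 \<le> r)"
  unfolding newt_def less_eq_vec_def by auto

lemma newt_eq_sums: "newt S = (\<Union>x\<in>convex hull (emb ` S). \<Union>r\<in>{r. 0 \<le> r}. {x + r})"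
  unfolding set_eq_iff mem_newt by blast

lemma closed_nonneg_vec: "closed {u :: real^'n. 0 \<le> u}"
  using closed_interval_right_cart[of 0] by (simp add: less_eq_vec_def)

lemma closed_newt: "finite S \<Longrightarrow> closed (newt S)"
  unfolding newt_eq_sums
  by (intro compact_closed_sums finite_imp_compact_convex_hull closed_nonneg_vec) auto

lemma convex_newt: "convex (newt S)"
proof -
  have "convex {r :: real^'n. 0 \<le> r}"
    unfolding convex_def less_eq_vec_def by (auto intro!: add_nonneg_nonneg mult_nonneg_nonneg)
  then show ?thesis
    unfolding newt_eq_sums by (intro convex_sums convex_convex_hull)
qed

lemma newt_empty [simp]: "newt {} = {}"
  unfolding newt_def by simp

lemma convex_hull_subset_newt: "convex hull (emb ` S) \<subseteq> newt S"
proof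
  fix x assume "x \<in> convex hull (emb ` S)"
  then show "x \<in> newt S" unfolding mem_newt by (intro exI[of _ x] exI[of _ 0]) simp
qed

lemma emb_in_newt: "p \<in> S \<Longrightarrow> emb p \<in> newt S"
  by (rule subsetD[OF convex_hull_subset_newt]) (simp add: hull_inc)

lemma newt_eq_empty_iff [simp]: "newt S = {} \<longleftrightarrow> S = {}"
proof
  show "newt S = {} \<Longrightarrow> S = {}" using emb_in_newt by blast
qed simp

lemma newt_add_nonneg:
  assumes "x \<in> newt S" "0 \<le> r"
  shows "x + r \<in> newt S"
proof -
  obtain c r' where "x = c + r'" "c \<in> convex hull (emb ` S)" "0 \<le> r'"
    using assms(1) unfolding mem_newt by blast
  then show ?thesis
    unfolding mem_newt using assms(2) by (intro exI[of _ c] exI[of _ "r' + r"]) (simp add: add.assoc)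
qed

lemma trop_le_inner_newt:
  assumes "finite S" "x \<in> newt S" "0 \<le> u"
  shows "trop S u \<le> u \<bullet> x"
proof -
  obtain c r where x: "x = c + r" and c: "c \<in> convex hull (emb ` S)" and r: "0 \<le> r"
    using assms(2) unfolding mem_newt by blast
  have "convex hull (emb ` S) \<subseteq> {y. trop S u \<le> u \<bullet> y}"
    by (rule hull_minimal) (auto simp: convex_halfspace_ge trop_le assms(1))
  with c have "trop S u \<le> u \<bullet> c" by auto
  moreover have "0 \<le> u \<bullet> r" using assms(3) r by (rule inner_nonneg_nonneg)
  ultimately show ?thesis by (simp add: x inner_add_right)
qed

lemma mem_newt_iff_trop_le:
  assumes "finite S" "S \<noteq> {}"
  shows "x \<in> newt S \<longleftrightarrow> (\<forall>u\<ge>0. trop S u \<le> u \<bullet> x)"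
proof (intro iffI allI impI)
  show "x \<in> newt S \<Longrightarrow> 0 \<le> u \<Longrightarrow> trop S u \<le> u \<bullet> x" for u
    using trop_le_inner_newt assms(1) by blast
next
  assume le: "\<forall>u\<ge>0. trop S u \<le> u \<bullet> x"
  show "x \<in> newt S"
  proof (rule ccontr)
    assume "x \<notin> newt S"
    then obtain a b where ax: "a \<bullet> x < b" and aN: "\<And>y. y \<in> newt S \<Longrightarrow> b < a \<bullet> y"
      using separating_hyperplane_closed_point[OF convex_newt closed_newt[OF assms(1)]] by blast
    obtain s where s: "s \<in> S" using assms(2) by auto
    \<comment> \<open>newt S contains every ray emb s + t e_i, so the separating functional is nonnegative\<close>
    have "0 \<le> a $ i" for i
    proof (rule ccontr)
      assume neg: "\<not> 0 \<le> a $ i"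
      define t where "t = (a \<bullet> emb s - b) / - a $ i"
      have "0 \<le> t"
        using aN[OF emb_in_newt[OF s]] neg unfolding t_def by (intro divide_nonneg_pos) auto
      then have "emb s + axis i t \<in> newt S"
        by (intro newt_add_nonneg[OF emb_in_newt[OF s]]) (simp add: less_eq_vec_def axis_def)
      then have "b < a \<bullet> (emb s + axis i t)" by (rule aN)
      also have "\<dots> = b" using neg by (simp add: inner_add_right inner_axis t_def)
      finally show False by simp
    qed
    then have "trop S a \<le> a \<bullet> x" using le by (simp add: less_eq_vec_def)
    moreover obtain p where "p \<in> S" "trop S a = a \<bullet> emb p"
      using trop_attained assms by blast
    moreover from this have "b < a \<bullet> emb p" using aN emb_in_newt by blast
    ultimately show False using ax by linarith
  qed
qed

section \<open>Vertices of Newton polyhedra\<close>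

lemma newt_mono:
  assumes "S \<subseteq> T"
  shows "newt S \<subseteq> newt T"
proof
  fix y assume "y \<in> newt S"
  then obtain c r where "y = c + r" "c \<in> convex hull (emb ` S)" "0 \<le> r"
    unfolding mem_newt by blast
  moreover have "convex hull (emb ` S) \<subseteq> convex hull (emb ` T)"
    using assms by (intro hull_mono image_mono)
  ultimately show "y \<in> newt T" unfolding mem_newt by blast
qed

lemma notin_open_segment_if_below:
  fixes x y z :: "real^'n"
  assumes "x \<le> y" "x \<le> z"
  shows "x \<notin> open_segment y z"
proof
  assume "x \<in> open_segment y z"
  then obtain t where "y \<noteq> z" "0 < t" "t < 1" and x: "x = (1 - t) *\<^sub>R y + t *\<^sub>R z"
    unfolding in_segment by auto
  have "y $ i = z $ i" for i
  proof -
    have nonneg: "0 \<le> (1 - t) * (y $ i - x $ i)" "0 \<le> t * (z $ i - x $ i)"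
      using assms \<open>0 < t\<close> \<open>t < 1\<close> by (simp_all add: less_eq_vec_def)
    have "x $ i = (1 - t) * y $ i + t * z $ i" using x by simp
    then have "(1 - t) * (y $ i - x $ i) + t * (z $ i - x $ i) = 0"
      by (simp add: algebra_simps)
    then have "(1 - t) * (y $ i - x $ i) = 0" "t * (z $ i - x $ i) = 0"
      using nonneg by linarith+
    then show ?thesis using \<open>0 < t\<close> \<open>t < 1\<close> by simp
  qed
  with \<open>y \<noteq> z\<close> show False by (simp add: vec_eq_iff)
qed

lemma newt_below_if_unique_min:
  assumes "p \<in> S" "0 \<le> u" and min: "\<And>q. q \<in> S \<Longrightarrow> q \<noteq> p \<Longrightarrow> u \<bullet> emb p < u \<bullet> emb q"
    and "y \<in> newt S" "u \<bullet> y \<le> u \<bullet> emb p"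
  shows "emb p \<le> y"
proof -
  obtain c r where y: "y = c + r" and c: "c \<in> convex hull (emb ` S)" and r: "0 \<le> r"
    using assms(4) unfolding mem_newt by blast
  have S: "emb ` S = insert (emb p) (emb ` (S - {p}))" using assms(1) by blast
  have "c = emb p"
  proof (cases "S - {p} = {}")
    case True
    then have "emb ` (S - {p}) = {}" by simp
    with c S show ?thesis by simp
  next
    case False
    then obtain t b where t: "0 \<le> t" "t \<le> 1" and b: "b \<in> convex hull (emb ` (S - {p}))"
      and cb: "c = (1 - t) *\<^sub>R emb p + t *\<^sub>R b"
      using c unfolding S convex_hull_insert_alt by auto
    have "convex hull (emb ` (S - {p})) \<subseteq> {x. u \<bullet> emb p < u \<bullet> x}"
      by (rule hull_minimal) (use min in \<open>auto simp: convex_halfspace_gt\<close>)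
    with b have pb: "u \<bullet> emb p < u \<bullet> b" by auto
    have "t = 0"
    proof (rule ccontr)
      assume "t \<noteq> 0"
      then have "0 < t * (u \<bullet> b - u \<bullet> emb p)" using t pb by simp
      moreover have "u \<bullet> y = u \<bullet> emb p + t * (u \<bullet> b - u \<bullet> emb p) + u \<bullet> r"
        by (simp add: y cb inner_add_right algebra_simps)
      moreover have "0 \<le> u \<bullet> r" using assms(2) r by (rule inner_nonneg_nonneg)
      ultimately show False using assms(5) by linarith
    qed
    then show ?thesis using cb by simp
  qed
  then show ?thesis using y r by simp
qed

lemma extreme_point_of_newt_if_unique_min:
  assumes "finite S" "p \<in> S" "0 \<le> u" and min: "\<And>q. q \<in> S \<Longrightarrow> q \<noteq> p \<Longrightarrow> u \<bullet> emb p < u \<bullet> emb q"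
  shows "emb p extreme_point_of newt S"
proof -
  obtain q where q: "q \<in> S" "trop S u = u \<bullet> emb q"
    using trop_attained assms(1,2) by blast
  have "trop S u = u \<bullet> emb p"
  proof (rule antisym)
    show "u \<bullet> emb p \<le> trop S u"
      using min[OF q(1)] q(2) by (cases "q = p") auto
  qed (rule trop_le[OF assms(1,2)])
  then have face: "newt S \<inter> {x. u \<bullet> x = u \<bullet> emb p} face_of newt S"
    using trop_le_inner_newt[OF assms(1) _ assms(3)]
    by (intro face_of_Int_supporting_hyperplane_ge convex_newt) auto
  have p: "emb p \<in> newt S" using emb_in_newt[OF assms(2)] .
  show ?thesis
    unfolding extreme_point_of_def
  proof (intro conjI ballI p)
    fix y z assume yz: "y \<in> newt S" "z \<in> newt S"
    show "emb p \<notin> open_segment y z"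
    proof
      assume seg: "emb p \<in> open_segment y z"
      with face yz p have "u \<bullet> y = u \<bullet> emb p" "u \<bullet> z = u \<bullet> emb p"
        unfolding face_of_def by blast+
      then have "emb p \<le> y" "emb p \<le> z"
        using newt_below_if_unique_min[OF assms(2,3) min] yz by auto
      with seg show False using notin_open_segment_if_below by blast
    qed
  qed
qed

lemma vert_if_notin_newt_remove:
  assumes "finite S" "p \<in> S" "emb p \<notin> newt (S - {p})"
  shows "p \<in> vert S"
proof -
  obtain u where "0 \<le> u" "\<And>q. q \<in> S \<Longrightarrow> q \<noteq> p \<Longrightarrow> u \<bullet> emb p < u \<bullet> emb q"
  proof (cases "S - {p} = {}")
    case True
    then show ?thesis using that[of 0] by auto
  next
    case False
    then obtain u where "0 \<le> u" "u \<bullet> emb p < trop (S - {p}) u"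
      using mem_newt_iff_trop_le[of "S - {p}"] assms by force
    moreover have "trop (S - {p}) u \<le> u \<bullet> emb q" if "q \<in> S" "q \<noteq> p" for q
      using assms(1) that by (intro trop_le) auto
    ultimately show ?thesis using that[of u] by fastforce
  qed
  then show ?thesis
    unfolding vert_def using extreme_point_of_newt_if_unique_min assms(1,2) by blast
qed

lemma vert_subset: "vert S \<subseteq> S"
proof
  fix p assume "p \<in> vert S"
  then have ext: "emb p extreme_point_of newt S" unfolding vert_def by simp
  then obtain c r where p: "emb p = c + r" and c: "c \<in> convex hull (emb ` S)" and r: "0 \<le> r"
    unfolding extreme_point_of_def mem_newt by blast
  have "r = 0"
  proof (rule ccontr)
    assume "r \<noteq> 0"
    have "c \<in> newt S" using c convex_hull_subset_newt by blast
    moreover have "c + 2 *\<^sub>R r \<in> newt S"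
      by (intro newt_add_nonneg \<open>c \<in> newt S\<close>) (simp add: r scaleR_nonneg_nonneg)
    moreover have "emb p \<in> open_segment c (c + 2 *\<^sub>R r)"
      using midpoint_in_open_segment[of c "c + 2 *\<^sub>R r"] \<open>r \<noteq> 0\<close>
      by (simp add: p midpoint_def scaleR_add_right)
    ultimately show False using ext unfolding extreme_point_of_def by blast
  qed
  then have "emb p \<in> convex hull (emb ` S)" using c p by simp
  then have "emb p extreme_point_of convex hull (emb ` S)"
    using ext convex_hull_subset_newt[of S] unfolding extreme_point_of_def by blast
  then have "emb p \<in> emb ` S" by (rule extreme_point_of_convex_hull)
  then show "p \<in> S" using emb_inj by blast
qed

lemma finite_vert: "finite S \<Longrightarrow> finite (vert S)"
  using vert_subset finite_subset by blast

lemma newt_remove: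
  assumes "p \<in> S" "emb p \<in> newt (S - {p})"
  shows "newt S = newt (S - {p})"
proof
  show "newt (S - {p}) \<subseteq> newt S" by (rule newt_mono) blast
  have "emb ` S \<subseteq> newt (S - {p})"
    using assms(2) emb_in_newt[of _ "S - {p}"] by blast
  then have hull: "convex hull (emb ` S) \<subseteq> newt (S - {p})"
    by (rule hull_minimal) (rule convex_newt)
  show "newt S \<subseteq> newt (S - {p})"
  proof
    fix y assume "y \<in> newt S"
    then obtain c r where "y = c + r" "c \<in> convex hull (emb ` S)" "0 \<le> r"
      unfolding mem_newt by blast
    then show "y \<in> newt (S - {p})" using hull newt_add_nonneg by blast
  qed
qed

lemma newt_vert: "finite S \<Longrightarrow> newt (vert S) = newt S"
proof (induction "card S" arbitrary: S rule: less_induct)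
  case less
  show ?case
  proof (cases "vert S = S")
    case False
    then obtain p where p: "p \<in> S" "p \<notin> vert S" using vert_subset by blast
    then have "emb p \<in> newt (S - {p})" using vert_if_notin_newt_remove less.prems by blast
    then have eq: "newt S = newt (S - {p})" using newt_remove p(1) by blast
    then have "vert S = vert (S - {p})" unfolding vert_def by simp
    moreover have "card (S - {p}) < card S" using less.prems p(1) by (rule card_Diff1_less)
    then have "newt (vert (S - {p})) = newt (S - {p})" using less by simp
    ultimately show ?thesis using eq by simp
  qed simp
qed

lemma vert_vert: "finite S \<Longrightarrow> vert (vert S) = vert S"
  using newt_vert by (metis vert_def)

lemma vert_eq_empty_iff: "finite S \<Longrightarrow> vert S = {} \<longleftrightarrow> S = {}"
  using newt_vert newt_eq_empty_iff by metis

lemma vert_in_VB: "finite S \<Longrightarrow> vert S \<in> VB"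
  unfolding VB_def by (simp add: finite_vert vert_vert)

definition etrop :: "'n::finite pt set \<Rightarrow> real^'n \<Rightarrow> ereal" where
  "etrop S u = (if S = {} then \<infinity> else ereal (trop S u))"

lemma etrop_empty [simp]: "etrop {} u = \<infinity>"
  by (simp add: etrop_def)

lemma etrop_nonempty: "S \<noteq> {} \<Longrightarrow> etrop S u = ereal (trop S u)"
  by (simp add: etrop_def)

lemma etrop_neq_minf [simp]: "etrop S u \<noteq> -\<infinity>"
  by (simp add: etrop_def)

lemma etrop_Un: "finite A \<Longrightarrow> finite B \<Longrightarrow> etrop (A \<union> B) u = min (etrop A u) (etrop B u)"
  by (cases "A = {}"; cases "B = {}") (simp_all add: etrop_def trop_def image_Un Min_Un)

definition sumset :: "'n pt set \<Rightarrow> 'n pt set \<Rightarrow> 'n pt set" where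
  "sumset A B = {padd x y | x y. x \<in> A \<and> y \<in> B}"

lemma sumset_eq_image: "sumset A B = (\<lambda>(x, y). padd x y) ` (A \<times> B)"
  unfolding sumset_def by auto

lemma finite_sumset: "finite A \<Longrightarrow> finite B \<Longrightarrow> finite (sumset A B)"
  by (simp add: sumset_eq_image)

lemma sumset_eq_empty_iff [simp]: "sumset A B = {} \<longleftrightarrow> A = {} \<or> B = {}"
  by (simp add: sumset_eq_image)

lemma trop_sumset:
  assumes "finite A" "finite B" "A \<noteq> {}" "B \<noteq> {}"
  shows "trop (sumset A B) u = trop A u + trop B u"
proof (rule antisym)
  obtain x y where "x \<in> A" "trop A u = u \<bullet> emb x" "y \<in> B" "trop B u = u \<bullet> emb y"
    using trop_attained assms by metis
  moreover from this have "padd x y \<in> sumset A B" unfolding sumset_def by blast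
  ultimately show "trop (sumset A B) u \<le> trop A u + trop B u"
    using trop_le[OF finite_sumset[OF assms(1,2)], of "padd x y" u]
    by (simp add: emb_padd inner_add_right)
next
  obtain z where z: "z \<in> sumset A B" "trop (sumset A B) u = u \<bullet> emb z"
    using trop_attained[OF finite_sumset[OF assms(1,2)]] assms(3,4) by auto
  then obtain x y where "x \<in> A" "y \<in> B" "z = padd x y" unfolding sumset_def by blast
  then show "trop A u + trop B u \<le> trop (sumset A B) u"
    using z trop_le[OF assms(1)] trop_le[OF assms(2)] by (simp add: emb_padd inner_add_right add_mono)
qed

lemma etrop_sumset: "finite A \<Longrightarrow> finite B \<Longrightarrow> etrop (sumset A B) u = etrop A u + etrop B u"
  by (cases "A = {} \<or> B = {}") (auto simp: etrop_def trop_sumset)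

lemma newt_subset_iff_etrop_le:
  assumes "finite S" "finite T"
  shows "newt S \<subseteq> newt T \<longleftrightarrow> (\<forall>u\<ge>0. etrop T u \<le> etrop S u)"
proof (cases "S = {}")
  case False
  show ?thesis
  proof (cases "T = {}")
    case True
    then show ?thesis using \<open>S \<noteq> {}\<close> by (auto simp: etrop_def intro: exI[of _ 0])
  next
    case False
    have "newt S \<subseteq> newt T \<longleftrightarrow> (\<forall>u\<ge>0. trop T u \<le> trop S u)"
    proof
      assume sub: "newt S \<subseteq> newt T"
      show "\<forall>u\<ge>0. trop T u \<le> trop S u"
      proof (intro allI impI)
        fix u :: "real^'a" assume "0 \<le> u"
        obtain p where "p \<in> S" "trop S u = u \<bullet> emb p" using trop_attained assms(1) \<open>S \<noteq> {}\<close> by blast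
        then show "trop T u \<le> trop S u"
          using sub emb_in_newt trop_le_inner_newt[OF assms(2) _ \<open>0 \<le> u\<close>] by fastforce
      qed
    next
      assume "\<forall>u\<ge>0. trop T u \<le> trop S u"
      then show "newt S \<subseteq> newt T"
        using mem_newt_iff_trop_le assms \<open>S \<noteq> {}\<close> \<open>T \<noteq> {}\<close> by (meson order_trans subsetI)
    qed
    then show ?thesis using \<open>S \<noteq> {}\<close> \<open>T \<noteq> {}\<close> by (simp add: etrop_def)
  qed
qed simp

lemma newt_eq_iff_etrop:
  assumes "finite S" "finite T"
  shows "newt S = newt T \<longleftrightarrow> (\<forall>u\<ge>0. etrop S u = etrop T u)"
  using newt_subset_iff_etrop_le[OF assms] newt_subset_iff_etrop_le[OF assms(2,1)]
  by (auto intro: antisym)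

lemma vert_eq_iff_etrop:
  assumes "finite S" "finite T"
  shows "vert S = vert T \<longleftrightarrow> (\<forall>u\<ge>0. etrop S u = etrop T u)"
proof -
  have "vert S = vert T \<longleftrightarrow> newt S = newt T"
    using newt_vert assms by (metis vert_def)
  then show ?thesis using newt_eq_iff_etrop[OF assms] by simp
qed

lemma etrop_vert: "finite S \<Longrightarrow> 0 \<le> u \<Longrightarrow> etrop (vert S) u = etrop S u"
  using vert_eq_iff_etrop[of "vert S" S] by (simp add: finite_vert vert_vert)

section \<open>The semiring VB[t]\<close>

lemma VB_finite: "a \<in> VB \<Longrightarrow> finite a"
  by (simp add: VB_def)

lemma empty_in_VB: "{} \<in> VB"
  unfolding VB_def using vert_subset by blast

lemma vone_in_VB: "vone \<in> VB"
proof -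
  have "vert vone \<subseteq> vone" "vert vone \<noteq> {}"
    using vert_subset vert_eq_empty_iff[of vone] by (auto simp: vone_def)
  then have "vert vone = vone" unfolding vone_def by blast
  then show ?thesis by (simp add: VB_def vone_def)
qed

lemma etrop_vone [simp]: "etrop vone u = 0"
proof -
  have "trop vone u = 0" by (simp add: vone_def trop_def)
  then show ?thesis by (simp add: etrop_def vone_def zero_ereal_def)
qed

lemma vtimes_eq: "vtimes a b = vert (sumset a b)"
  unfolding vtimes_def sumset_def ..

lemma vone_ne_empty [simp]: "vone \<noteq> {}"
  by (simp add: vone_def)

lemma finite_vtimes: "finite a \<Longrightarrow> finite b \<Longrightarrow> finite (vtimes a b)"
  by (simp add: vtimes_eq finite_vert finite_sumset)

lemma vplus_in_VB: "finite a \<Longrightarrow> finite b \<Longrightarrow> vplus a b \<in> VB"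
  by (simp add: vplus_def vert_in_VB)

lemma vtimes_in_VB: "finite a \<Longrightarrow> finite b \<Longrightarrow> vtimes a b \<in> VB"
  by (simp add: vtimes_eq vert_in_VB finite_sumset)

lemma vtimes_eq_empty_iff: "finite a \<Longrightarrow> finite b \<Longrightarrow> vtimes a b = {} \<longleftrightarrow> a = {} \<or> b = {}"
  by (simp add: vtimes_eq vert_eq_empty_iff finite_sumset)

lemma etrop_vplus:
  "finite a \<Longrightarrow> finite b \<Longrightarrow> 0 \<le> u \<Longrightarrow> etrop (vplus a b) u = min (etrop a u) (etrop b u)"
  by (simp add: vplus_def etrop_vert etrop_Un)

lemma etrop_vtimes:
  "finite a \<Longrightarrow> finite b \<Longrightarrow> 0 \<le> u \<Longrightarrow> etrop (vtimes a b) u = etrop a u + etrop b u"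
  by (simp add: vtimes_eq etrop_vert etrop_sumset finite_sumset)

section \<open>Valuations on VB(t)\<close>

type_synonym 'n frac = "('n pt set \<times> 'n pt set) set"

lemma Fdom_iff [simp]: "(a, b) \<in> Fdom \<longleftrightarrow> a \<in> VB \<and> b \<in> VB \<and> b \<noteq> {}"
  by (simp add: Fdom_def)

lemma ereal_add_eq_add_iff_diff_eq:
  "x + ereal d = y + ereal b \<longleftrightarrow> x - ereal b = y - ereal d"
  by (cases x; cases y) (auto simp: algebra_simps)

lemma frel_iff:
  assumes "(a, b) \<in> Fdom" "(c, d) \<in> Fdom"
  shows "((a, b), (c, d)) \<in> frel \<longleftrightarrow> (\<forall>u\<ge>0. etrop a u - etrop b u = etrop c u - etrop d u)"
proof -
  have fin: "finite a" "finite b" "finite c" "finite d"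
    using assms by (auto simp: VB_finite)
  have "((a, b), (c, d)) \<in> frel \<longleftrightarrow> vert (sumset a d) = vert (sumset c b)"
    using assms by (simp add: frel_def vtimes_eq)
  also have "\<dots> \<longleftrightarrow> (\<forall>u\<ge>0. etrop a u + etrop d u = etrop c u + etrop b u)"
    by (simp add: vert_eq_iff_etrop finite_sumset etrop_sumset fin)
  also have "\<dots> \<longleftrightarrow> (\<forall>u\<ge>0. etrop a u - etrop b u = etrop c u - etrop d u)"
    using assms by (simp add: etrop_nonempty ereal_add_eq_add_iff_diff_eq)
  finally show ?thesis .
qed

lemma equiv_frel: "equiv Fdom frel"
proof (rule equivI)
  show "frel \<subseteq> Fdom \<times> Fdom" "refl_on Fdom frel" "sym frel"
    unfolding frel_def refl_on_def sym_def by auto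
  show "trans frel"
  proof (rule transI)
    fix x y z assume xy: "(x, y) \<in> frel" and yz: "(y, z) \<in> frel"
    obtain a b c d e f where xyz: "x = (a, b)" "y = (c, d)" "z = (e, f)"
      by (metis surj_pair)
    have "(a, b) \<in> Fdom" "(c, d) \<in> Fdom" "(e, f) \<in> Fdom"
      using xy yz xyz unfolding frel_def by auto
    then show "(x, z) \<in> frel"
      using xy yz xyz frel_iff by (metis (no_types, lifting))
  qed
qed

lemma fcls_in_VBfrac: "(a, b) \<in> Fdom \<Longrightarrow> fcls a b \<in> VBfrac"
  unfolding fcls_def VBfrac_def by (rule quotientI)

lemma VBfrac_eq_fcls:
  assumes "X \<in> VBfrac" "(a, b) \<in> X"
  shows "(a, b) \<in> Fdom" "X = fcls a b"
proof -
  obtain x where x: "x \<in> Fdom" "X = frel `` {x}"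
    using assms(1) unfolding VBfrac_def by (rule quotientE)
  then have "(x, (a, b)) \<in> frel" using assms(2) by simp
  then show "(a, b) \<in> Fdom" "X = fcls a b"
    using x equiv_class_eq_iff[OF equiv_frel] unfolding fcls_def by blast+
qed

lemma fcls_eq_iff:
  "(a, b) \<in> Fdom \<Longrightarrow> (c, d) \<in> Fdom \<Longrightarrow>
    fcls a b = fcls c d \<longleftrightarrow> (\<forall>u\<ge>0. etrop a u - etrop b u = etrop c u - etrop d u)"
  unfolding fcls_def using eq_equiv_class_iff[OF equiv_frel] frel_iff by blast

lemma VBfrac_rep:
  assumes "X \<in> VBfrac"
  obtains a b where "(SOME p. p \<in> X) = (a, b)" "(a, b) \<in> X" "a \<in> VB" "b \<in> VB" "b \<noteq> {}"
proof -
  have "X \<noteq> {}"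
    using assms in_quotient_imp_non_empty[OF equiv_frel] unfolding VBfrac_def by blast
  then have "(SOME p. p \<in> X) \<in> X" by (simp add: some_in_eq)
  then show thesis using that VBfrac_eq_fcls(1)[OF assms] by (metis Fdom_iff prod.collapse)
qed

definition val :: "'n::finite frac \<Rightarrow> real^'n \<Rightarrow> ereal" where
  "val X u = etrop (fst (SOME p. p \<in> X)) u - etrop (snd (SOME p. p \<in> X)) u"

lemma val_eq:
  assumes "X \<in> VBfrac" "(a, b) \<in> X" "0 \<le> u"
  shows "val X u = etrop a u - etrop b u"
proof -
  obtain c d where cd: "(SOME p. p \<in> X) = (c, d)" "(c, d) \<in> X"
    using VBfrac_rep assms(1) by blast
  have "fcls c d = fcls a b" "(c, d) \<in> Fdom" "(a, b) \<in> Fdom"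
    using VBfrac_eq_fcls assms(1,2) cd(2) by metis+
  then have "etrop c u - etrop d u = etrop a u - etrop b u"
    using fcls_eq_iff[of c d a b] assms(3) by blast
  with cd(1) show ?thesis by (simp add: val_def)
qed

lemma val_fcls: "(a, b) \<in> Fdom \<Longrightarrow> 0 \<le> u \<Longrightarrow> val (fcls a b) u = etrop a u - etrop b u"
  using val_eq fcls_in_VBfrac equiv_class_self[OF equiv_frel] unfolding fcls_def by metis

lemma VBfrac_eqI:
  assumes "X \<in> VBfrac" "Y \<in> VBfrac" "\<And>u. 0 \<le> u \<Longrightarrow> val X u = val Y u"
  shows "X = Y"
proof -
  obtain a b c d where "(a, b) \<in> X" "(c, d) \<in> Y"
    using VBfrac_rep assms(1,2) by metis
  then show ?thesis
    using VBfrac_eq_fcls[OF assms(1)] VBfrac_eq_fcls[OF assms(2)] val_eq assms fcls_eq_iff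
    by metis
qed

lemma ereal_min_add_diff:
  "min (x + ereal d) (y + ereal b) - ereal (b + d) = min (x - ereal b) (y - ereal d)"
  by (cases x; cases y) (auto simp: min_def algebra_simps)

lemma ereal_add_add_diff:
  "x \<noteq> -\<infinity> \<Longrightarrow> y \<noteq> -\<infinity> \<Longrightarrow> (x + y) - ereal (b + d) = (x - ereal b) + (y - ereal d)"
  by (cases x; cases y) (auto simp: algebra_simps)

lemma fplus_VBfrac:
  assumes X: "X \<in> VBfrac" and Y: "Y \<in> VBfrac"
  shows "fplus X Y \<in> VBfrac" "0 \<le> u \<Longrightarrow> val (fplus X Y) u = min (val X u) (val Y u)"
proof -
  obtain a b c d where ab: "(SOME p. p \<in> X) = (a, b)" "(a, b) \<in> X" "a \<in> VB" "b \<in> VB" "b \<noteq> {}"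
    and cd: "(SOME p. p \<in> Y) = (c, d)" "(c, d) \<in> Y" "c \<in> VB" "d \<in> VB" "d \<noteq> {}"
    using VBfrac_rep X Y by metis
  have fin: "finite a" "finite b" "finite c" "finite d"
    using ab cd by (simp_all add: VB_finite)
  have eq: "fplus X Y = fcls (vplus (vtimes a d) (vtimes c b)) (vtimes b d)"
    unfolding fplus_def Let_def ab(1) cd(1) by simp
  have dom: "(vplus (vtimes a d) (vtimes c b), vtimes b d) \<in> Fdom"
    using ab cd fin by (simp add: vplus_in_VB vtimes_in_VB vtimes_eq_empty_iff finite_vtimes)
  show "fplus X Y \<in> VBfrac" unfolding eq using dom by (rule fcls_in_VBfrac)
  assume "0 \<le> u"
  have "val (fplus X Y) u
      = min (etrop a u + etrop d u) (etrop c u + etrop b u) - (etrop b u + etrop d u)"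
    unfolding eq using \<open>0 \<le> u\<close>
    by (simp add: val_fcls[OF dom] etrop_vplus etrop_vtimes finite_vtimes fin)
  also have "\<dots> = min (val X u) (val Y u)"
    using ab cd \<open>0 \<le> u\<close> by (simp add: val_eq X Y etrop_nonempty ereal_min_add_diff)
  finally show "val (fplus X Y) u = min (val X u) (val Y u)" .
qed

lemma fmult_VBfrac:
  assumes X: "X \<in> VBfrac" and Y: "Y \<in> VBfrac"
  shows "fmult X Y \<in> VBfrac" "0 \<le> u \<Longrightarrow> val (fmult X Y) u = val X u + val Y u"
proof -
  obtain a b c d where ab: "(SOME p. p \<in> X) = (a, b)" "(a, b) \<in> X" "a \<in> VB" "b \<in> VB" "b \<noteq> {}"
    and cd: "(SOME p. p \<in> Y) = (c, d)" "(c, d) \<in> Y" "c \<in> VB" "d \<in> VB" "d \<noteq> {}"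
    using VBfrac_rep X Y by metis
  have fin: "finite a" "finite b" "finite c" "finite d"
    using ab cd by (simp_all add: VB_finite)
  have eq: "fmult X Y = fcls (vtimes a c) (vtimes b d)"
    unfolding fmult_def Let_def ab(1) cd(1) by simp
  have dom: "(vtimes a c, vtimes b d) \<in> Fdom"
    using ab cd fin by (simp add: vtimes_in_VB vtimes_eq_empty_iff)
  show "fmult X Y \<in> VBfrac" unfolding eq using dom by (rule fcls_in_VBfrac)
  assume "0 \<le> u"
  have "val (fmult X Y) u = (etrop a u + etrop c u) - (etrop b u + etrop d u)"
    unfolding eq using \<open>0 \<le> u\<close> by (simp add: val_fcls[OF dom] etrop_vtimes fin)
  also have "\<dots> = val X u + val Y u"
    using ab cd \<open>0 \<le> u\<close> by (simp add: val_eq X Y etrop_nonempty ereal_add_add_diff)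
  finally show "val (fmult X Y) u = val X u + val Y u" .
qed

lemma fzero_VBfrac: "fzero \<in> VBfrac" "0 \<le> u \<Longrightarrow> val fzero u = \<infinity>"
proof -
  have dom: "({}, vone) \<in> Fdom" by (simp add: empty_in_VB vone_in_VB)
  show "fzero \<in> VBfrac" unfolding fzero_def using dom by (rule fcls_in_VBfrac)
  show "0 \<le> u \<Longrightarrow> val fzero u = \<infinity>" unfolding fzero_def by (simp add: val_fcls[OF dom])
qed

lemma fone_VBfrac: "fone \<in> VBfrac" "0 \<le> u \<Longrightarrow> val fone u = 0"
proof -
  have dom: "(vone, vone) \<in> Fdom" by (simp add: vone_in_VB)
  show "fone \<in> VBfrac" unfolding fone_def using dom by (rule fcls_in_VBfrac)
  show "0 \<le> u \<Longrightarrow> val fone u = 0" unfolding fone_def by (simp add: val_fcls[OF dom])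
qed

lemma fle_iff: "X \<in> VBfrac \<Longrightarrow> Y \<in> VBfrac \<Longrightarrow> fle X Y \<longleftrightarrow> (\<forall>u\<ge>0. val Y u \<le> val X u)"
  unfolding fle_def
  by (metis (no_types, lifting) VBfrac_eqI fplus_VBfrac min.absorb2 min.cobounded1)

lemma Circ_iff: "X \<in> Circ \<longleftrightarrow> X \<in> VBfrac \<and> (\<forall>u\<ge>0. 0 \<le> val X u)"
proof -
  have "fle X fone \<longleftrightarrow> (\<forall>u\<ge>0. 0 \<le> val X u)" if "X \<in> VBfrac"
    using fle_iff[OF that fone_VBfrac(1)] by (simp add: fone_VBfrac(2))
  then show ?thesis unfolding Circ_def by blast
qed

lemma Circ_VBfrac: "X \<in> Circ \<Longrightarrow> X \<in> VBfrac"
  by (simp add: Circ_iff)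

lemma val_Circ_nonneg: "X \<in> Circ \<Longrightarrow> 0 \<le> u \<Longrightarrow> 0 \<le> val X u"
  by (simp add: Circ_iff)

lemma fone_in_Circ: "fone \<in> Circ"
  by (simp add: Circ_iff fone_VBfrac)

lemma fplus_in_Circ: "X \<in> Circ \<Longrightarrow> Y \<in> Circ \<Longrightarrow> fplus X Y \<in> Circ"
  by (simp add: Circ_iff fplus_VBfrac)

lemma fmult_in_Circ: "X \<in> Circ \<Longrightarrow> Y \<in> Circ \<Longrightarrow> fmult X Y \<in> Circ"
  by (simp add: Circ_iff fmult_VBfrac)

definition vfrac :: "'n::finite pt set \<Rightarrow> 'n pt set \<Rightarrow> 'n frac" where
  "vfrac a b = fcls (vert a) (vert b)"

lemma vfrac_dom: "finite a \<Longrightarrow> finite b \<Longrightarrow> b \<noteq> {} \<Longrightarrow> (vert a, vert b) \<in> Fdom"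
  by (simp add: vert_in_VB vert_eq_empty_iff)

lemma vfrac_VBfrac: "finite a \<Longrightarrow> finite b \<Longrightarrow> b \<noteq> {} \<Longrightarrow> vfrac a b \<in> VBfrac"
  unfolding vfrac_def by (intro fcls_in_VBfrac vfrac_dom)

lemma val_vfrac:
  assumes "finite a" "finite b" "b \<noteq> {}" "0 \<le> u"
  shows "val (vfrac a b) u = etrop a u - etrop b u"
  using val_fcls[OF vfrac_dom[OF assms(1-3)] assms(4)] assms by (simp add: vfrac_def etrop_vert)

lemma VBfrac_eq_vfrac:
  assumes "X \<in> VBfrac" "(a, b) \<in> X"
  shows "X = vfrac a b" "finite a" "finite b" "b \<noteq> {}"
proof -
  have "a \<in> VB" "b \<in> VB" "b \<noteq> {}" "X = fcls a b"
    using VBfrac_eq_fcls[OF assms] by auto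
  then show "X = vfrac a b" "finite a" "finite b" "b \<noteq> {}"
    by (simp_all add: vfrac_def VB_def)
qed

lemma ereal_diff_nonneg_iff: "0 \<le> x - ereal r \<longleftrightarrow> ereal r \<le> x"
  by (cases x) auto

lemma vfrac_in_Circ_iff:
  assumes "finite a" "finite b" "b \<noteq> {}"
  shows "vfrac a b \<in> Circ \<longleftrightarrow> newt a \<subseteq> newt b"
proof -
  have "vfrac a b \<in> Circ \<longleftrightarrow> (\<forall>u\<ge>0. etrop b u \<le> etrop a u)"
    using assms by (simp add: Circ_iff vfrac_VBfrac val_vfrac etrop_nonempty ereal_diff_nonneg_iff)
  also have "\<dots> \<longleftrightarrow> newt a \<subseteq> newt b"
    using newt_subset_iff_etrop_le assms(1,2) by blast
  finally show ?thesis .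
qed

lemma newt_singleton_subset_iff: "newt {w} \<subseteq> newt b \<longleftrightarrow> emb w \<in> newt b"
proof
  assume "emb w \<in> newt b"
  show "newt {w} \<subseteq> newt b"
  proof
    fix y assume "y \<in> newt {w}"
    then obtain r where "y = emb w + r" "0 \<le> r" unfolding mem_newt by auto
    then show "y \<in> newt b" using newt_add_nonneg \<open>emb w \<in> newt b\<close> by blast
  qed
qed (use emb_in_newt in blast)

lemma vfrac_eqI:
  assumes "finite a" "finite b" "b \<noteq> {}" "finite c" "finite d" "d \<noteq> {}"
    and "\<And>u. 0 \<le> u \<Longrightarrow> etrop a u - etrop b u = etrop c u - etrop d u"
  shows "vfrac a b = vfrac c d"
  using assms by (intro VBfrac_eqI vfrac_VBfrac) (simp_all add: val_vfrac)

lemma vfrac_empty: "finite b \<Longrightarrow> b \<noteq> {} \<Longrightarrow> vfrac {} b = fzero"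
  by (intro VBfrac_eqI vfrac_VBfrac fzero_VBfrac)
    (simp_all add: val_vfrac fzero_VBfrac etrop_nonempty)

lemma vfrac_self: "finite b \<Longrightarrow> b \<noteq> {} \<Longrightarrow> vfrac b b = fone"
  by (intro VBfrac_eqI vfrac_VBfrac fone_VBfrac)
    (simp_all add: val_vfrac fone_VBfrac etrop_nonempty)

lemma ereal_min_diff: "min x y - ereal c = min (x - ereal c) (y - ereal c)"
  by (cases x; cases y) (auto simp: min_def)

lemma vfrac_insert:
  assumes "finite A" "finite b" "b \<noteq> {}"
  shows "vfrac (insert w A) b = fplus (vfrac {w} b) (vfrac A b)"
proof (rule VBfrac_eqI)
  show "vfrac (insert w A) b \<in> VBfrac" "fplus (vfrac {w} b) (vfrac A b) \<in> VBfrac"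
    using assms by (simp_all add: vfrac_VBfrac fplus_VBfrac)
  fix u :: "real^'a" assume "0 \<le> u"
  have "etrop (insert w A) u = min (etrop {w} u) (etrop A u)"
    using etrop_Un[of "{w}" A] assms(1) by simp
  then show "val (vfrac (insert w A) b) u = val (fplus (vfrac {w} b) (vfrac A b)) u"
    using assms \<open>0 \<le> u\<close>
    by (simp add: val_vfrac vfrac_VBfrac fplus_VBfrac etrop_nonempty ereal_min_diff)
qed

lemma val_zero_closed:
  assumes "X \<in> VBfrac"
  shows "closed {u. 0 \<le> u \<and> val X u = 0}"
proof -
  obtain a b where ab: "(a, b) \<in> X" using VBfrac_rep assms by metis
  note rep = VBfrac_eq_vfrac[OF assms ab]
  show ?thesis
  proof (cases "a = {}")
    case True
    then have "{u. 0 \<le> u \<and> val X u = 0} = {}"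
      using rep by (simp add: val_vfrac etrop_nonempty)
    then show ?thesis by (metis closed_empty)
  next
    case False
    then have "val X u = ereal (trop a u - trop b u)" if "0 \<le> u" for u
      using rep that by (simp add: val_vfrac etrop_nonempty)
    then have "{u. 0 \<le> u \<and> val X u = 0} = {u. 0 \<le> u} \<inter> {u. trop a u = trop b u}"
      by (auto simp: zero_ereal_def)
    then show ?thesis
      using rep False
      by (simp add: closed_Int closed_nonneg_vec closed_Collect_eq continuous_on_trop)
  qed
qed

lemma val_eq_zero_by_density:
  assumes X: "X \<in> VBfrac" and "p \<noteq> q"
    and off: "\<And>u. 0 \<le> u \<Longrightarrow> u \<bullet> emb p \<noteq> u \<bullet> emb q \<Longrightarrow> val X u = 0"
    and "0 \<le> u"
  shows "val X u = 0"
proof (cases "u \<bullet> emb p = u \<bullet> emb q")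
  case True
  obtain i where i: "p i \<noteq> q i" using \<open>p \<noteq> q\<close> by auto
  define f where "f e = u + e *\<^sub>R axis i 1" for e :: real
  have "f e \<in> {u. 0 \<le> u \<and> val X u = 0}" if "0 < e" for e
  proof -
    have "0 \<le> f e"
      using \<open>0 \<le> u\<close> that by (simp add: f_def less_eq_vec_def axis_def)
    moreover have "f e \<bullet> emb p \<noteq> f e \<bullet> emb q"
      using True i that by (simp add: f_def inner_add_left inner_axis' emb_def)
    ultimately show ?thesis using off by simp
  qed
  then have "\<forall>\<^sub>F e in at_right 0. f e \<in> {u. 0 \<le> u \<and> val X u = 0}"
    using eventually_at_right_less[of 0] by (rule eventually_mono[rotated]) simp
  moreover have "(f \<longlongrightarrow> u + 0 *\<^sub>R axis i 1) (at_right 0)"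
    unfolding f_def by (intro tendsto_intros)
  then have "(f \<longlongrightarrow> u) (at_right 0)" by simp
  ultimately have "u \<in> {u. 0 \<le> u \<and> val X u = 0}"
    by (intro Lim_in_closed_set[OF val_zero_closed[OF X]]) simp_all
  then show ?thesis by simp
qed (use off \<open>0 \<le> u\<close> in blast)

lemma val_vfrac_pair:
  "0 \<le> u \<Longrightarrow> val (vfrac {p} {p, q}) u = ereal (u \<bullet> emb p - min (u \<bullet> emb p) (u \<bullet> emb q))"
  by (simp add: val_vfrac etrop_nonempty min_def)

lemma vfrac_pair_in_Circ: "vfrac {p} {p, q} \<in> Circ"
  by (simp add: vfrac_in_Circ_iff newt_singleton_subset_iff emb_in_newt)

section \<open>Maximal k-ideals\<close>

definition adjoin :: "'n::finite frac set \<Rightarrow> 'n frac \<Rightarrow> 'n frac set" where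
  "adjoin I x = {z \<in> Circ. \<exists>i\<in>I. \<forall>u\<ge>0. min (val i u) (val x u) \<le> val z u}"

lemma subset_adjoin: "circ_ideal I \<Longrightarrow> I \<subseteq> adjoin I x"
  unfolding adjoin_def circ_ideal_def by force

lemma mem_adjoin: "circ_ideal I \<Longrightarrow> x \<in> Circ \<Longrightarrow> x \<in> adjoin I x"
  unfolding adjoin_def circ_ideal_def by force

lemma fplus_mem_adjoin:
  fixes I :: "'n::finite frac set"
  assumes I: "circ_ideal I" and z: "z1 \<in> adjoin I x" "z2 \<in> adjoin I x"
  shows "fplus z1 z2 \<in> adjoin I x"
proof -
  obtain i1 i2 where z: "z1 \<in> Circ" "z2 \<in> Circ" and i: "i1 \<in> I" "i2 \<in> I"
    and le1: "\<forall>u\<ge>0. min (val i1 u) (val x u) \<le> val z1 u"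
    and le2: "\<forall>u\<ge>0. min (val i2 u) (val x u) \<le> val z2 u"
    using z unfolding adjoin_def by blast
  have i': "i1 \<in> Circ" "i2 \<in> Circ" "fplus i1 i2 \<in> I"
    using I i unfolding circ_ideal_def by blast+
  have "min (val (fplus i1 i2) u) (val x u) \<le> val (fplus z1 z2) u" if "0 \<le> u" for u
  proof -
    have "min (val (fplus i1 i2) u) (val x u) = min (min (val i1 u) (val i2 u)) (val x u)"
      using i' that by (simp add: fplus_VBfrac Circ_VBfrac)
    also have "\<dots> \<le> min (val z1 u) (val z2 u)"
    proof -
      have "min (min (val i1 u) (val i2 u)) (val x u) \<le> min (val i1 u) (val x u)"
        "min (min (val i1 u) (val i2 u)) (val x u) \<le> min (val i2 u) (val x u)"
        by (rule min.mono; simp)+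
      then show ?thesis
        using le1[rule_format, OF that] le2[rule_format, OF that] by (meson min.boundedI order_trans)
    qed
    also have "\<dots> = val (fplus z1 z2) u"
      using z that by (simp add: fplus_VBfrac Circ_VBfrac)
    finally show ?thesis .
  qed
  then show ?thesis
    unfolding adjoin_def using i'(3) fplus_in_Circ[OF z] by blast
qed

lemma circ_k_ideal_adjoin:
  fixes I :: "'n::finite frac set"
  assumes I: "circ_ideal I"
  shows "circ_k_ideal (adjoin I x)"
  unfolding circ_k_ideal_def circ_ideal_def
proof (intro conjI ballI impI)
  show "adjoin I x \<subseteq> Circ" unfolding adjoin_def by blast
  show "fzero \<in> adjoin I x"
    using subset_adjoin[OF I] I unfolding circ_ideal_def by blast
  show "fplus z1 z2 \<in> adjoin I x" if "z1 \<in> adjoin I x" "z2 \<in> adjoin I x" for z1 z2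
    using fplus_mem_adjoin[OF I that] .
next
  fix r z :: "'n frac" assume r: "r \<in> Circ" and "z \<in> adjoin I x"
  then obtain i where z: "z \<in> Circ" and i: "i \<in> I"
    and le: "\<forall>u\<ge>0. min (val i u) (val x u) \<le> val z u"
    unfolding adjoin_def by blast
  have "val z u \<le> val (fmult r z) u" "val z u \<le> val (fmult z r) u" if "0 \<le> u" for u
    using val_Circ_nonneg[OF r that] r z that
    by (auto simp: fmult_VBfrac Circ_VBfrac add_increasing add_increasing2)
  then show "fmult r z \<in> adjoin I x" "fmult z r \<in> adjoin I x"
    unfolding adjoin_def using i le fmult_in_Circ r z by (blast intro: order_trans)+
next
  fix a b :: "'n frac" assume "a \<in> adjoin I x" "b \<in> Circ" "fplus a b \<in> adjoin I x"
  then obtain i where a: "a \<in> Circ" and i: "i \<in> I"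
    and le: "\<forall>u\<ge>0. min (val i u) (val x u) \<le> val (fplus a b) u"
    unfolding adjoin_def by blast
  have "val (fplus a b) u \<le> val b u" if "0 \<le> u" for u
    using a \<open>b \<in> Circ\<close> that by (simp add: fplus_VBfrac Circ_VBfrac)
  then show "b \<in> adjoin I x"
    unfolding adjoin_def using i le \<open>b \<in> Circ\<close> by (blast intro: order_trans)
qed

lemma val_fplus_eq_zero_off_hyperplane:
  assumes ij: "i \<in> Circ" "j \<in> Circ"
    and i: "\<And>u. 0 \<le> u \<Longrightarrow> min (val i u) (val (vfrac {p} {p, q}) u) = 0"
    and j: "\<And>u. 0 \<le> u \<Longrightarrow> min (val j u) (val (vfrac {q} {q, p}) u) = 0"
    and u: "0 \<le> u" and ne: "u \<bullet> emb p \<noteq> u \<bullet> emb q"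
  shows "val (fplus i j) u = 0"
proof -
  have min_zero: "a = 0" if "min a b = 0" "0 < b" for a b :: ereal
    using that by (auto simp: min_def split: if_splits)
  have "val i u = 0 \<or> val j u = 0"
  proof (cases "u \<bullet> emb q < u \<bullet> emb p")
    case True
    then have "0 < val (vfrac {p} {p, q}) u" using u by (simp add: val_vfrac_pair min_def)
    then show ?thesis using min_zero i[OF u] by blast
  next
    case False
    then have "0 < val (vfrac {q} {q, p}) u" using u ne by (simp add: val_vfrac_pair min_def)
    then show ?thesis using min_zero j[OF u] by blast
  qed
  moreover have "val (fplus i j) u = min (val i u) (val j u)"
    using ij u by (simp add: fplus_VBfrac Circ_VBfrac)
  moreover have "0 \<le> val i u" "0 \<le> val j u"
    using val_Circ_nonneg ij u by blast+
  ultimately show ?thesis by (auto simp: min_def)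
qed

definition ideal_less :: "'n::finite frac set \<Rightarrow> 'n pt \<Rightarrow> 'n pt \<Rightarrow> bool" where
  "ideal_less I p q \<longleftrightarrow> p \<noteq> q \<and> vfrac {p} {p, q} \<notin> I"

locale max_k_ideal =
  fixes I :: "'n::finite frac set"
  assumes maximal: "maximal_circ_k_ideal I"
begin

lemma ideal: "circ_ideal I"
  and k_closed: "a \<in> I \<Longrightarrow> b \<in> Circ \<Longrightarrow> fplus a b \<in> I \<Longrightarrow> b \<in> I"
  and proper: "I \<noteq> Circ"
  and maximalD: "circ_k_ideal J \<Longrightarrow> J \<noteq> Circ \<Longrightarrow> I \<subseteq> J \<Longrightarrow> J = I"
  using maximal unfolding maximal_circ_k_ideal_def circ_k_ideal_def by blast+

lemma subset_Circ: "I \<subseteq> Circ"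
  and fzero_mem: "fzero \<in> I"
  and fplus_mem: "x \<in> I \<Longrightarrow> y \<in> I \<Longrightarrow> fplus x y \<in> I"
  using ideal unfolding circ_ideal_def by blast+

lemma mem_if_val_le:
  assumes "x \<in> I" "y \<in> Circ" "\<And>u. 0 \<le> u \<Longrightarrow> val x u \<le> val y u"
  shows "y \<in> I"
proof -
  have x: "x \<in> VBfrac" and y: "y \<in> VBfrac"
    using assms(1,2) subset_Circ Circ_VBfrac by blast+
  have "fplus x y = x"
    using x y assms(3) by (intro VBfrac_eqI fplus_VBfrac) (simp_all add: fplus_VBfrac min.absorb1)
  then show ?thesis using k_closed assms(1,2) by simp
qed

lemma fone_notin: "fone \<notin> I"
proof
  assume "fone \<in> I"
  then have "y \<in> I" if "y \<in> Circ" for y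
    using mem_if_val_le[OF _ that] val_Circ_nonneg[OF that] by (simp add: fone_VBfrac)
  then have "Circ \<subseteq> I" by blast
  then show False using subset_Circ proper by blast
qed

lemma exists_min_val_eq_zero:
  assumes "x \<in> Circ" "x \<notin> I"
  obtains i where "i \<in> I" "\<And>u. 0 \<le> u \<Longrightarrow> min (val i u) (val x u) = 0"
proof -
  have "adjoin I x = Circ"
    using maximalD[OF circ_k_ideal_adjoin[OF ideal] _ subset_adjoin[OF ideal]]
      mem_adjoin[OF ideal assms(1)] assms(2) by blast
  then obtain i where i: "i \<in> I" and le: "\<forall>u\<ge>0. min (val i u) (val x u) \<le> val fone u"
    using fone_in_Circ unfolding adjoin_def by blast
  have "min (val i u) (val x u) = 0" if "0 \<le> u" for u
    using le that fone_VBfrac val_Circ_nonneg[OF assms(1) that]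
      val_Circ_nonneg[OF subsetD[OF subset_Circ i] that] by (metis antisym min.bounded_iff)
  with i that show thesis by blast
qed

lemma ideal_less_asym: "ideal_less I p q \<Longrightarrow> \<not> ideal_less I q p"
proof
  assume "ideal_less I p q" "ideal_less I q p"
  then have "p \<noteq> q" and x: "vfrac {p} {p, q} \<notin> I" and y: "vfrac {q} {q, p} \<notin> I"
    unfolding ideal_less_def by simp_all
  obtain i where i: "i \<in> I" "\<And>u. 0 \<le> u \<Longrightarrow> min (val i u) (val (vfrac {p} {p, q}) u) = 0"
    using exists_min_val_eq_zero[OF vfrac_pair_in_Circ x] by blast
  obtain j where j: "j \<in> I" "\<And>u. 0 \<le> u \<Longrightarrow> min (val j u) (val (vfrac {q} {q, p}) u) = 0"
    using exists_min_val_eq_zero[OF vfrac_pair_in_Circ y] by blast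
  have ij: "i \<in> Circ" "j \<in> Circ" using i(1) j(1) subset_Circ by blast+
  have k: "fplus i j \<in> I" "fplus i j \<in> VBfrac"
    using fplus_mem[OF i(1) j(1)] subset_Circ Circ_VBfrac by blast+
  have "fplus i j = fone"
  proof (rule VBfrac_eqI[OF k(2) fone_VBfrac(1)])
    fix u :: "real^'n" assume "0 \<le> u"
    then show "val (fplus i j) u = val fone u"
      using val_eq_zero_by_density[OF k(2) \<open>p \<noteq> q\<close>
          val_fplus_eq_zero_off_hyperplane[OF ij i(2) j(2)]]
        fone_VBfrac(2) by simp
  qed
  then show False using k(1) fone_notin by simp
qed

lemma ideal_less_total: "p \<noteq> q \<Longrightarrow> ideal_less I p q \<or> ideal_less I q p"
proof (rule ccontr)
  assume "p \<noteq> q" "\<not> (ideal_less I p q \<or> ideal_less I q p)"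
  moreover have "{q, p} = {p, q}" by blast
  ultimately have "vfrac {p} {p, q} \<in> I" "vfrac {q} {p, q} \<in> I"
    unfolding ideal_less_def by simp_all
  then have "fplus (vfrac {p} {p, q}) (vfrac {q} {p, q}) \<in> I" by (rule fplus_mem)
  moreover have "fplus (vfrac {p} {p, q}) (vfrac {q} {p, q}) = fone"
    using vfrac_insert[of "{q}" "{p, q}" p] vfrac_self[of "{p, q}"] by simp
  ultimately show False using fone_notin by simp
qed

lemma vfrac_pair_mem_iff: "p \<noteq> q \<Longrightarrow> vfrac {p} {p, q} \<in> I \<longleftrightarrow> ideal_less I q p"
  using ideal_less_total[of p q] ideal_less_asym[of q p] unfolding ideal_less_def by blast

lemma vfrac_mem_if_singletons_mem:
  assumes "finite A" "finite b" "b \<noteq> {}" "\<And>w. w \<in> A \<Longrightarrow> vfrac {w} b \<in> I"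
  shows "vfrac A b \<in> I"
  using assms(1,4)
proof (induction A rule: finite_induct)
  case empty
  then show ?case using vfrac_empty[OF assms(2,3)] fzero_mem by simp
next
  case (insert w A)
  then show ?case using vfrac_insert[OF insert(1) assms(2,3)] fplus_mem by simp
qed

lemma exists_vfrac_singleton_notin:
  assumes "finite b" "b \<noteq> {}"
  obtains w where "w \<in> b" "vfrac {w} b \<notin> I"
  using vfrac_mem_if_singletons_mem[OF assms(1) assms] vfrac_self[OF assms] fone_notin by auto

lemma vfrac_singleton_mem_if_less:
  assumes "finite b" "b \<noteq> {}" "emb w \<in> newt b" "emb v \<in> newt b" "ideal_less I v w"
  shows "vfrac {w} b \<in> I"
proof (rule mem_if_val_le)
  show "vfrac {w} {w, v} \<in> I"
    using assms(5) vfrac_pair_mem_iff[of w v] unfolding ideal_less_def by auto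
  show "vfrac {w} b \<in> Circ"
    using assms(1-3) by (simp add: vfrac_in_Circ_iff newt_singleton_subset_iff)
  fix u :: "real^'n" assume "0 \<le> u"
  then have "trop b u \<le> min (u \<bullet> emb w) (u \<bullet> emb v)"
    using trop_le_inner_newt[OF assms(1,3)] trop_le_inner_newt[OF assms(1,4)] by simp
  then show "val (vfrac {w} {w, v}) u \<le> val (vfrac {w} b) u"
    using assms(1,2) \<open>0 \<le> u\<close> by (simp add: val_vfrac etrop_nonempty del: ereal_min)
qed

lemma less_if_vfrac_singleton_notin:
  assumes "finite b" "w \<in> b" "vfrac {w} b \<notin> I" "v \<in> b" "v \<noteq> w"
  shows "ideal_less I w v"
  using ideal_less_total[OF assms(5)] vfrac_singleton_mem_if_less[of b w v] assms emb_in_newt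
  by blast

lemma ideal_less_trans:
  assumes pq: "ideal_less I p q" and qr: "ideal_less I q r"
  shows "ideal_less I p r"
proof -
  have "p \<noteq> q" "q \<noteq> r" using pq qr by (simp_all add: ideal_less_def)
  define b where "b = {p, q, r}"
  have b: "finite b" "b \<noteq> {}" by (simp_all add: b_def)
  obtain w where w: "w \<in> b" "vfrac {w} b \<notin> I"
    using exists_vfrac_singleton_notin[OF b] by blast
  have least: "ideal_less I w v" if "v \<in> b" "v \<noteq> w" for v
    using less_if_vfrac_singleton_notin[OF b(1) w that] .
  have "w \<noteq> q"
  proof
    assume "w = q"
    then have "ideal_less I q p" using least[of p] \<open>p \<noteq> q\<close> by (simp add: b_def)
    with pq show False using ideal_less_asym by blast
  qed
  moreover have "w \<noteq> r"
  proof
    assume "w = r"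
    then have "ideal_less I r q" using least[of q] \<open>q \<noteq> r\<close> by (simp add: b_def)
    with qr show False using ideal_less_asym by blast
  qed
  ultimately have "w = p" using w(1) by (simp add: b_def)
  moreover have "p \<noteq> r"
  proof
    assume "p = r"
    with qr have "ideal_less I q p" by simp
    with pq show False using ideal_less_asym by blast
  qed
  ultimately show ?thesis using least[of r] by (simp add: b_def)
qed

lemma ideal_less_zero: "a \<noteq> (\<lambda>i. 0) \<Longrightarrow> ideal_less I (\<lambda>i. 0) a"
proof -
  assume "a \<noteq> (\<lambda>i. 0)"
  have "vfrac {\<lambda>i. 0} {\<lambda>i. 0, a} = fone"
  proof (rule VBfrac_eqI)
    show "vfrac {\<lambda>i. 0} {\<lambda>i. 0, a} \<in> VBfrac" "fone \<in> VBfrac"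
      by (simp_all add: vfrac_VBfrac fone_VBfrac)
    fix u :: "real^'n" assume "0 \<le> u"
    then show "val (vfrac {\<lambda>i. 0} {\<lambda>i. 0, a}) u = val fone u"
      using inner_nonneg_nonneg[OF \<open>0 \<le> u\<close> emb_nonneg, of a]
      by (simp add: val_vfrac_pair fone_VBfrac)
  qed
  then show ?thesis using \<open>a \<noteq> (\<lambda>i. 0)\<close> fone_notin by (simp add: ideal_less_def)
qed

lemma ideal_less_padd: "ideal_less I p q \<Longrightarrow> ideal_less I (padd p c) (padd q c)"
proof -
  assume "ideal_less I p q"
  moreover have "padd p c \<noteq> padd q c" if "p \<noteq> q"
    using that by (auto simp: padd_def fun_eq_iff)
  moreover have "vfrac {padd p c} {padd p c, padd q c} = vfrac {p} {p, q}"
    by (rule vfrac_eqI)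
      (simp_all add: etrop_nonempty emb_padd inner_add_right min_add_distrib_left[symmetric]
        del: ereal_min)
  ultimately show ?thesis unfolding ideal_less_def by simp
qed

lemma monomial_order_ideal_less: "monomial_order (ideal_less I)"
  unfolding monomial_order_def
proof (intro conjI allI impI)
  show "\<not> ideal_less I a a" for a by (simp add: ideal_less_def)
qed (simp_all add: ideal_less_trans ideal_less_total ideal_less_zero ideal_less_padd)

lemma min_ord_ideal_less:
  assumes "finite b" "w \<in> b" "vfrac {w} b \<notin> I"
  shows "min_ord (ideal_less I) b = w"
  unfolding min_ord_def
proof (rule the_equality)
  show "w \<in> b \<and> (\<forall>y\<in>b. y \<noteq> w \<longrightarrow> ideal_less I w y)"
    using assms(2) less_if_vfrac_singleton_notin[OF assms] by blast
  show "z = w" if z: "z \<in> b \<and> (\<forall>y\<in>b. y \<noteq> z \<longrightarrow> ideal_less I z y)" for z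
  proof (rule ccontr)
    assume "z \<noteq> w"
    then have "ideal_less I z w" "ideal_less I w z"
      using z assms(2) less_if_vfrac_singleton_notin[OF assms, of z] by auto
    then show False using ideal_less_asym by blast
  qed
qed

lemma vfrac_singleton_mem_if_mem:
  assumes "X \<in> I" "(a, b) \<in> X" "v \<in> a"
  shows "vfrac {v} b \<in> I"
proof (rule mem_if_val_le[OF assms(1)])
  have X: "X \<in> Circ" using assms(1) subset_Circ by blast
  note rep = VBfrac_eq_vfrac[OF Circ_VBfrac[OF X] assms(2)]
  have "newt a \<subseteq> newt b" using X vfrac_in_Circ_iff[OF rep(2-4)] rep(1) by simp
  then show "vfrac {v} b \<in> Circ"
    using rep emb_in_newt[OF assms(3)] by (auto simp: vfrac_in_Circ_iff newt_singleton_subset_iff)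
  fix u :: "real^'n" assume "0 \<le> u"
  have "a \<noteq> {}" using assms(3) by blast
  then have "etrop a u \<le> etrop {v} u"
    using trop_le[OF rep(2) assms(3), of u] by (simp add: etrop_nonempty)
  then have "etrop a u - etrop b u \<le> etrop {v} u - etrop b u"
    by (rule ereal_minus_mono) simp
  moreover have "val X u = etrop a u - etrop b u"
    using val_vfrac[OF rep(2-4) \<open>0 \<le> u\<close>] rep(1) by simp
  moreover have "val (vfrac {v} b) u = etrop {v} u - etrop b u"
    using val_vfrac[OF _ rep(3,4) \<open>0 \<le> u\<close>] by simp
  ultimately show "val X u \<le> val (vfrac {v} b) u" by simp
qed

lemma mem_iff_min_ord_notin:
  assumes X: "X \<in> Circ" and ab: "(a, b) \<in> X"
  shows "X \<in> I \<longleftrightarrow> min_ord (ideal_less I) b \<notin> a"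
proof -
  note rep = VBfrac_eq_vfrac[OF Circ_VBfrac[OF X] ab]
  have fin: "finite a" "finite b" "b \<noteq> {}" using rep by simp_all
  have newt_ab: "newt a \<subseteq> newt b" using X vfrac_in_Circ_iff[OF fin] rep(1) by simp
  obtain v where v: "v \<in> b" "vfrac {v} b \<notin> I"
    using exists_vfrac_singleton_notin[OF fin(2,3)] by blast
  have min: "min_ord (ideal_less I) b = v" using min_ord_ideal_less[OF fin(2) v] .
  show ?thesis
  proof
    assume "X \<in> I"
    then show "min_ord (ideal_less I) b \<notin> a"
      using vfrac_singleton_mem_if_mem[OF _ ab] v(2) by (auto simp: min)
  next
    assume "min_ord (ideal_less I) b \<notin> a"
    then have "v \<notin> a" by (simp add: min)
    have "vfrac {w} b \<in> I" if "w \<in> a" for w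
    proof -
      have w: "emb w \<in> newt b" using newt_ab emb_in_newt[OF that] by blast
      have "\<not> ideal_less I w v"
        using vfrac_singleton_mem_if_less[OF fin(2,3) emb_in_newt[OF v(1)] w] v(2) by blast
      moreover have "w \<noteq> v" using \<open>v \<notin> a\<close> that by blast
      ultimately have "ideal_less I v w" using ideal_less_total[of w v] by blast
      then show ?thesis using vfrac_singleton_mem_if_less[OF fin(2,3) w emb_in_newt[OF v(1)]] by blast
    qed
    then show "X \<in> I" using vfrac_mem_if_singletons_mem[OF fin] rep(1) by blast
  qed
qed

lemma eq_m_dagger: "I = m_dagger (ideal_less I)"
proof
  show "I \<subseteq> m_dagger (ideal_less I)"
  proof
    fix X assume "X \<in> I"
    then have "X \<in> Circ" using subset_Circ by blast
    moreover obtain a b where "(a, b) \<in> X" using VBfrac_rep Circ_VBfrac[OF \<open>X \<in> Circ\<close>] by metis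
    ultimately show "X \<in> m_dagger (ideal_less I)"
      unfolding m_dagger_def using mem_iff_min_ord_notin[of X] \<open>X \<in> I\<close> by blast
  qed
  show "m_dagger (ideal_less I) \<subseteq> I"
  proof
    fix X assume "X \<in> m_dagger (ideal_less I)"
    then obtain a b where "X \<in> Circ" "(a, b) \<in> X" "min_ord (ideal_less I) b \<notin> a"
      unfolding m_dagger_def by blast
    then show "X \<in> I" using mem_iff_min_ord_notin by blast
  qed
qed

end

theorem corollary4p12:
  fixes I :: "('n::finite pt set \<times> 'n pt set) set set"
  assumes "maximal_circ_k_ideal I"
  shows "\<exists>lt. monomial_order lt \<and> I = m_dagger lt"
proof -
  interpret max_k_ideal I by unfold_locales (rule assms)
  show ?thesis using monomial_order_ideal_less eq_m_dagger by blast
qed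

end
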